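(* Let $h>0$ and $\alpha>2$, and let $\mathrm{P}_{\mathrm{cov}}^{(\mathrm{C})}(\theta,\lambda)$ and $\mathrm{P}_{\mathrm{cov}}^{(\mathrm{S})}(\theta,\lambda)$ be the coverage probabilities for closest-BS association ($\theta>0$) and strongest-BS association ($\theta\ge1$) with BS density $\lambda$ and BS height $h$, given by $$\mathrm{P}_{\mathrm{cov}}^{(\mathrm{C})}(\theta,\lambda)=\frac{1}{\psi(\theta)+1}e^{-\pi\lambda h^2\psi(\theta)},\qquad \mathrm{P}_{\mathrm{cov}}^{(\mathrm{S})}(\theta,\lambda)=2\pi\lambda\int_h^\infty e^{-\pi\lambda h^2\psi(\theta h^{-\alpha}r^\alpha)}\,r\,dr.$$ Then: (i) $\lim_{\lambda\to0}\mathrm{P}_{\mathrm{cov}}^{(\mathrm{C})}(\theta,\lambda)=\frac{1}{\psi(\theta)+1}$; (ii) $\lim_{\lambda\to0}\mathrm{P}_{\mathrm{cov}}^{(\mathrm{S})}(\theta,\lambda)=\frac{\alpha\sin(2\pi/\alpha)}{2\pi\theta^{2/\alpha}}$; (iii) $\lim_{\lambda\to\infty}\mathrm{P}_{\mathrm{cov}}^{(\mathrm{C})}(\theta,\lambda)=\lim_{\lambda\to\infty}\mathrm{P}_{\mathrm{cov}}^{(\mathrm{S})}(\theta,\lambda)=0$.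
   Context: $\psi(z)=\frac{2z}{\alpha-2}\,{}_2F_1\big(1,1-\tfrac{2}{\alpha};2-\tfrac{2}{\alpha};-z\big)$ for $z>0$, with ${}_2F_1$ the Gauss hypergeometric function. Model: a typical user at the origin of $\mathbb{R}^2$ at ground level; BSs form a homogeneous Poisson point process of intensity $\lambda$, all at height $h$; i.i.d. unit-mean exponential fading; pathloss $(r^2+h^2)^{-\alpha/2}$ with $r$ the horizontal distance; noise neglected. Closest-BS association: served by the horizontally nearest BS, coverage $=\Pr[\mathrm{SIR}>\theta]$; strongest-BS association: coverage $=\Pr[\max_x\mathrm{SIR}_x>\theta]$. The values in (i) and (ii) are the coverage probabilities of the corresponding models with $h=0$. *)

theory Defs
  imports "HOL-Analysis.Analysis"
begin

text \<open>Gauss hypergeometric function 2F1(a,b;c;x) for real arguments, given by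
  Euler's integral representation (valid for c > b > 0 and x < 1); this is the
  analytic continuation of the power series to the whole ray x < 1, which is
  needed here since the argument is -z with z > 0 arbitrary.\<close>
definition hyp2F1 :: "real \<Rightarrow> real \<Rightarrow> real \<Rightarrow> real \<Rightarrow> real" where
  "hyp2F1 a b c x =
     Gamma c / (Gamma b * Gamma (c - b)) *
     integral {0..1} (\<lambda>t. t powr (b - 1) * (1 - t) powr (c - b - 1) * (1 - x * t) powr (- a))"

definition psi :: "real \<Rightarrow> real \<Rightarrow> real" where
  "psi \<alpha> z = 2 * z / (\<alpha> - 2) * hyp2F1 1 (1 - 2 / \<alpha>) (2 - 2 / \<alpha>) (- z)"

definition Pcov_C :: "real \<Rightarrow> real \<Rightarrow> real \<Rightarrow> real \<Rightarrow> real" where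
  "Pcov_C \<alpha> h \<theta> lam = 1 / (psi \<alpha> \<theta> + 1) * exp (- pi * lam * h\<^sup>2 * psi \<alpha> \<theta>)"

definition Pcov_S :: "real \<Rightarrow> real \<Rightarrow> real \<Rightarrow> real \<Rightarrow> real" where
  "Pcov_S \<alpha> h \<theta> lam = 2 * pi * lam *
     integral {h..} (\<lambda>r. exp (- pi * lam * h\<^sup>2 * psi \<alpha> (\<theta> * h powr (- \<alpha>) * r powr \<alpha>)) * r)"

end

theory Submission
  imports Defs "HOL-Real_Asymp.Real_Asymp"
begin

text \<open>
  Put \<open>d = 2 / \<alpha>\<close>. Euler's integral and the substitution \<open>v = z t / (1 + z t)\<close> give
  \<open>\<psi>(z) = d z^d I(z / (1 + z))\<close>, where \<open>I(w)\<close> is the integral of \<open>v^(-d) (1 - v)^(d - 1)\<close>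
  over \<open>[0, w]\<close>, an incomplete Beta integral with complete value
  \<open>I(1) = B(1 - d, d) = \<pi> / sin (\<pi> d)\<close> by the reflection formula. Bounding the missing tail
  gives \<open>\<kappa> z^d - 1 \<le> \<psi>(z) \<le> \<kappa> z^d\<close> with \<open>\<kappa> = 2\<pi> / (\<alpha> sin (2\<pi> / \<alpha>)) > 1\<close>.
  So with \<open>c = \<kappa> \<theta>^d\<close> the integrand of the strongest-BS coverage is squeezed between two
  Gaussian integrands, and \<open>exp (-\<pi>\<lambda>c h\<^sup>2) / c \<le> P\<^sub>S \<le> exp (-\<pi>\<lambda>(c - 1) h\<^sup>2) / c\<close>.
  Both bounds tend to \<open>1 / c\<close> as \<open>\<lambda> \<rightarrow> 0\<close>; for \<open>\<theta> \<ge> 1\<close> we have \<open>c > 1\<close>, so the upper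
  one tends to \<open>0\<close> as \<open>\<lambda> \<rightarrow> \<infinity>\<close>. The closest-BS limits only need \<open>\<psi>(\<theta>) > 0\<close>.
\<close>

lemma Gamma_reflection_real:
  fixes x :: real
  shows "Gamma x * Gamma (1 - x) = pi / sin (pi * x)"
proof -
  have "complex_of_real (Gamma x * Gamma (1 - x)) = of_real (pi / sin (pi * x))"
    using Gamma_reflection_complex[of "of_real x"]
    by (simp flip: Gamma_complex_of_real sin_of_real)
  then show ?thesis by (simp only: of_real_eq_iff)
qed

lemma sin_less_self:
  fixes x :: real
  assumes "0 < x" "x < pi"
  shows "sin x < x"
proof -
  have "sin (x/2) \<le> x/2" using assms by (intro sin_x_le_x) simp
  moreover have "0 < sin (x/2)" using assms by (intro sin_gt_zero) auto
  moreover have "cos (x/2) < 1"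
    using cos_monotone_0_pi[of 0 "x/2"] assms by simp
  ultimately have "2 * sin (x/2) * cos (x/2) < x"
    using mult_strict_left_mono[of "cos (x/2)" 1 "2 * sin (x/2)"] by linarith
  then show ?thesis using sin_double[of "x/2"] by simp
qed

lemma has_integral_one_minus_powr:
  fixes d w :: real
  assumes "0 < d" "w \<le> 1"
  shows "((\<lambda>v. (1 - v) powr (d - 1)) has_integral (1 - w) powr d / d) {w..1}"
proof -
  define F where "F v = - ((1 - v) powr d / d)" for v
  have "((\<lambda>v. (1 - v) powr (d - 1)) has_integral F 1 - F w) {w..1}"
  proof (rule fundamental_theorem_of_calculus_interior)
    show "continuous_on {w..1} F"
      unfolding F_def using assms by (intro continuous_intros continuous_on_powr') auto
    show "(F has_vector_derivative (1 - v) powr (d - 1)) (at v)" if "v \<in> {w<..<1}" for v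
      unfolding F_def using that assms
      by (auto intro!: derivative_eq_intros simp flip: has_real_derivative_iff_has_vector_derivative)
  qed fact
  then show ?thesis using assms by (simp add: F_def)
qed

lemma has_integral_gaussian_tail:
  fixes b h :: real
  assumes b: "0 < b" and h: "0 \<le> h"
  shows "((\<lambda>r. exp (- b * r\<^sup>2) * r) has_integral exp (- b * h\<^sup>2) / (2 * b)) {h..}"
proof (rule has_integral_to_inf)
  show "(\<lambda>r. exp (- b * r\<^sup>2) * r) integrable_on {h..y}" for y
    by (intro integrable_continuous_interval continuous_intros)
  show "0 \<le> exp (- b * r\<^sup>2) * r" if "h \<le> r" for r
    using that h by simp
  define F where "F r = - exp (- b * r\<^sup>2) / (2 * b)" for r
  have "((\<lambda>r. exp (- b * r\<^sup>2) * r) has_integral F y - F h) {h..y}" if "h \<le> y" for y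
    unfolding F_def using b that
    by (intro fundamental_theorem_of_calculus)
       (auto intro!: derivative_eq_intros simp flip: has_real_derivative_iff_has_vector_derivative
             simp: field_simps power2_eq_square)
  then have "\<forall>\<^sub>F y in at_top. integral {h..y} (\<lambda>r. exp (- b * r\<^sup>2) * r) = F y - F h"
    by (meson eventually_at_top_linorderI integral_unique)
  moreover have "((\<lambda>y. F y - F h) \<longlongrightarrow> exp (- b * h\<^sup>2) / (2 * b)) at_top"
    unfolding F_def using b by real_asymp
  ultimately show "((\<lambda>y. integral {h..y} (\<lambda>r. exp (- b * r\<^sup>2) * r)) \<longlongrightarrow> exp (- b * h\<^sup>2) / (2 * b)) at_top"
    by (simp add: filterlim_cong)
qed

lemma integral_bounds_of_has_integral_bounds:
  fixes f l u :: "'a::euclidean_space \<Rightarrow> real"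
  assumes S: "S \<in> sets lebesgue" and f: "f \<in> borel_measurable (lebesgue_on S)"
    and l: "(l has_integral L) S" and u: "(u has_integral U) S"
    and bounds: "\<And>x. x \<in> S \<Longrightarrow> 0 \<le> l x \<and> l x \<le> f x \<and> f x \<le> u x"
  shows "L \<le> integral S f" and "integral S f \<le> U"
proof -
  have "norm (f x) \<le> u x" if "x \<in> S" for x
    using bounds[OF that] by auto
  then have "f integrable_on S"
    using measurable_bounded_by_integrable_imp_integrable[OF f _ _ S] u by blast
  then show "L \<le> integral S f" and "integral S f \<le> U"
    using has_integral_le[OF l integrable_integral] has_integral_le[OF integrable_integral u] bounds
    by auto
qed

definition beta_integrand :: "real \<Rightarrow> real \<Rightarrow> real" where
  "beta_integrand d v = v powr (- d) * (1 - v) powr (d - 1)"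

lemma beta_integrand_nonneg: "0 \<le> beta_integrand d v"
  by (simp add: beta_integrand_def)

lemma one_le_beta_integrand:
  assumes "0 < d" "d < 1" "0 < v" "v < 1"
  shows "1 \<le> beta_integrand d v"
proof -
  have "1 \<le> v powr (- d)" using assms by (simp add: powr_minus one_le_inverse_iff powr_le1)
  moreover have "1 \<le> (1 - v) powr (d - 1)"
  proof -
    have "(1 - v) powr (d - 1) = inverse ((1 - v) powr (1 - d))"
      by (simp add: powr_minus[symmetric])
    moreover have "(1 - v) powr (1 - d) \<le> 1" "0 < (1 - v) powr (1 - d)"
      using assms by (auto intro: powr_le1)
    ultimately show ?thesis by (simp add: one_le_inverse_iff)
  qed
  ultimately show ?thesis
    using mult_mono[of 1 "v powr (- d)" 1 "(1 - v) powr (d - 1)"] by (simp add: beta_integrand_def)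
qed

lemma set_integrable_beta_integrand:
  assumes "0 < d" "d < 1"
  shows "set_integrable lborel {0..1} (beta_integrand d)"
  using integrable_Beta[of "1 - d" d] assms by (simp add: beta_integrand_def[abs_def])

lemma beta_integrand_integrable_on:
  assumes "0 < d" "d < 1" "0 \<le> a" "b \<le> 1"
  shows "beta_integrand d integrable_on {a..b}"
  by (rule set_borel_integral_eq_integral(1), rule set_integrable_subset[OF set_integrable_beta_integrand])
     (use assms in auto)

lemma has_integral_beta_integrand:
  assumes "0 < d" "d < 1"
  shows "(beta_integrand d has_integral pi / sin (pi * d)) {0..1}"
proof -
  have "Beta (1 - d) d = pi / sin (pi * d)"
    using Gamma_reflection_real[of d] by (simp add: Beta_def mult.commute)
  then show ?thesis
    using has_integral_Beta_real[of "1 - d" d] assms by (simp add: beta_integrand_def[abs_def])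
qed

lemma has_integral_beta_integrand_substitution:
  fixes d z :: real
  assumes d: "0 < d" "d < 1" and z: "0 < z"
  shows "((\<lambda>t. t powr (- d) / (1 + z * t)) has_integral
           z powr (d - 1) * integral {0..z / (1 + z)} (beta_integrand d)) {0..1}"
proof -
  define g where "g t = z * t / (1 + z * t)" for t
  define g' where "g' t = z / (1 + z * t)\<^sup>2" for t
  have pos: "0 < 1 + z * t" if "t \<in> {0..1}" for t
    using that z by (simp add: add_pos_nonneg)
  have I: "set_integrable lborel {g 0..g 1} (beta_integrand d)"
    by (rule set_integrable_subset[OF set_integrable_beta_integrand[OF d]]) (use z in \<open>auto simp: g_def\<close>)
  have deriv: "(g has_real_derivative g' t) (at t)" if "t \<in> {0..1}" for t
    using pos[OF that] unfolding g_def g'_def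
    by (auto intro!: derivative_eq_intros simp: power2_eq_square field_simps)
  have cont: "continuous_on {0..1} g'"
    unfolding g'_def using pos by (intro continuous_intros) force
  have nonneg: "0 \<le> g' t" if "t \<in> {0..1}" for t
    using z by (simp add: g'_def)
  note subst = integral_substitution[OF I deriv cont nonneg]
  have integrand: "beta_integrand d (g t) * g' t = z powr (1 - d) * (t powr (- d) / (1 + z * t))"
    if "t \<in> {0..1}" for t
  proof (cases "t = 0")
    case False
    define u where "u = 1 + z * t"
    have t: "0 < t" and u: "0 < u" using that False pos[OF that] by (auto simp: u_def)
    have "g t = z * t / u" "g' t = z / u\<^sup>2" "1 - z * t / u = 1 / u"
      using u by (simp_all add: g_def g'_def u_def field_simps)
    moreover have "(z * t / u) powr (- d) = z powr (- d) * t powr (- d) * u powr d"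
      using z t u by (simp add: powr_divide powr_mult powr_minus field_simps)
    moreover have "(1 / u) powr (d - 1) = u powr (1 - d)"
      using u by (simp add: powr_divide powr_minus_divide[symmetric] powr_minus)
    ultimately have "beta_integrand d (g t) * g' t
        = (z powr (- d) * z) * t powr (- d) * (u powr d * u powr (1 - d)) / u\<^sup>2"
      unfolding beta_integrand_def by (simp only:) (simp add: ac_simps)
    also have "\<dots> = z powr (1 - d) * (t powr (- d) / u)"
      using z u by (simp add: powr_add[symmetric] powr_mult_base power2_eq_square field_simps)
    finally show ?thesis by (simp add: u_def)
  qed (simp add: beta_integrand_def g_def)
  have "(LINT t:{0..1}|lborel. beta_integrand d (g t) * g' t) = (LINT v:{g 0..g 1}|lborel. beta_integrand d v)"
    using subst(2) by (simp add: set_lebesgue_integral_def mult.commute)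
  then have "((\<lambda>t. beta_integrand d (g t) * g' t) has_integral integral {g 0..g 1} (beta_integrand d)) {0..1}"
    using set_borel_integral_eq_integral[OF subst(1)] set_borel_integral_eq_integral(2)[OF I]
    by (simp add: has_integral_integral)
  then have "((\<lambda>t. z powr (1 - d) * (t powr (- d) / (1 + z * t))) has_integral
              integral {g 0..g 1} (beta_integrand d)) {0..1}"
    by (rule has_integral_eq[rotated]) (rule integrand)
  then have "((\<lambda>t. z powr (1 - d) * (t powr (- d) / (1 + z * t))) has_integral
              integral {0..z / (1 + z)} (beta_integrand d)) {0..1}"
    by (simp add: g_def)
  from has_integral_mult_right[OF this, of "z powr (d - 1)"] show ?thesis
    using z by (simp add: mult.assoc[symmetric] powr_add[symmetric])
qed

lemma psi_eq_incomplete_beta: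
  fixes \<alpha> z :: real
  assumes \<alpha>: "2 < \<alpha>" and z: "0 < z"
  shows "psi \<alpha> z = 2 / \<alpha> * z powr (2 / \<alpha>) * integral {0..z / (1 + z)} (beta_integrand (2 / \<alpha>))"
proof -
  define d where "d = 2 / \<alpha>"
  have d: "0 < d" "d < 1" using \<alpha> by (auto simp: d_def field_simps)
  define B where "B = integral {0..z / (1 + z)} (beta_integrand d)"
  \<comment> \<open>The Euler integrand of \<open>hyp2F1 1 (1 - d) (2 - d) (- z)\<close> is \<open>t powr (- d) / (1 + z * t)\<close>
      except at \<open>t = 1\<close>, where \<open>0 powr 0 = 0\<close>.\<close>
  have "integral {0..1} (\<lambda>t. t powr (1 - d - 1) * (1 - t) powr (2 - d - (1 - d) - 1) * (1 - - z * t) powr - 1)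
      = integral {0..1} (\<lambda>t. t powr (- d) / (1 + z * t))"
  proof (rule integral_spike[of "{1}"])
    fix t :: real assume t: "t \<in> {0..1} - {1}"
    then have "0 < 1 + z * t" using z by (simp add: add_pos_nonneg)
    with t show "t powr (- d) / (1 + z * t)
        = t powr (1 - d - 1) * (1 - t) powr (2 - d - (1 - d) - 1) * (1 - - z * t) powr - 1"
      by (simp add: powr_minus divide_inverse)
  qed auto
  also have "\<dots> = z powr (d - 1) * B"
    using has_integral_beta_integrand_substitution[OF d z] by (simp add: B_def integral_unique)
  finally have integral_eq: "integral {0..1} (\<lambda>t. t powr (1 - d - 1) * (1 - t) powr (2 - d - (1 - d) - 1)
      * (1 - - z * t) powr - 1) = z powr (d - 1) * B" .
  have "Gamma (1 - d + 1) = (1 - d) * Gamma (1 - d)"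
    by (rule Gamma_plus1) (use d in \<open>auto dest: nonpos_Ints_nonpos\<close>)
  moreover have "0 < Gamma (1 - d)" using d by simp
  ultimately have "psi \<alpha> z = 2 * z / (\<alpha> - 2) * ((1 - d) * (z powr (d - 1) * B))"
    unfolding psi_def hyp2F1_def using integral_eq by (simp add: d_def)
  also have "\<dots> = d * (z * z powr (d - 1)) * B"
    using \<alpha> by (simp add: d_def field_simps)
  also have "z * z powr (d - 1) = z powr d"
    using z by (simp add: powr_mult_base)
  finally show ?thesis by (simp add: d_def B_def)
qed

lemma integral_beta_integrand_le:
  assumes d: "0 < d" "d < 1" and w: "0 \<le> w" "w \<le> 1"
  shows "integral {0..w} (beta_integrand d) \<le> pi / sin (pi * d)"
proof -
  have "integral {0..w} (beta_integrand d) \<le> integral {0..1} (beta_integrand d)"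
    using beta_integrand_integrable_on[OF d] beta_integrand_nonneg w
    by (intro integral_subset_le) auto
  then show ?thesis using integral_unique[OF has_integral_beta_integrand[OF d]] by simp
qed

lemma integral_beta_integrand_ge_half:
  assumes d: "0 < d" "d < 1" and w: "0 < w" "w < 1"
  shows "w / 2 \<le> integral {0..w} (beta_integrand d)"
proof -
  have "integral {w/2..w} (\<lambda>_. 1) \<le> integral {w/2..w} (beta_integrand d)"
    using beta_integrand_integrable_on[OF d] one_le_beta_integrand[OF d] w
    by (intro integral_le) auto
  also have "\<dots> \<le> integral {0..w} (beta_integrand d)"
    using beta_integrand_integrable_on[OF d] beta_integrand_nonneg w
    by (intro integral_subset_le) auto
  finally show ?thesis using w by simp
qed

lemma integral_beta_integrand_tail_le:
  assumes d: "0 < d" "d < 1" and w: "0 < w" "w \<le> 1"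
  shows "pi / sin (pi * d) - integral {0..w} (beta_integrand d) \<le> w powr (- d) * (1 - w) powr d / d"
proof -
  have "integral {0..w} (beta_integrand d) + integral {w..1} (beta_integrand d) = pi / sin (pi * d)"
    using integral_unique[OF has_integral_beta_integrand[OF d]] beta_integrand_integrable_on[OF d] w
    by (metis Henstock_Kurzweil_Integration.integral_combine order_less_imp_le order_refl)
  moreover have "integral {w..1} (beta_integrand d) \<le> integral {w..1} (\<lambda>v. w powr (- d) * (1 - v) powr (d - 1))"
  proof (rule integral_le)
    show "beta_integrand d integrable_on {w..1}"
      using beta_integrand_integrable_on[OF d] w by simp
    show "(\<lambda>v. w powr (- d) * (1 - v) powr (d - 1)) integrable_on {w..1}"
      using has_integral_one_minus_powr[OF d(1) w(2)] by (intro integrable_on_mult_right) blast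
    show "beta_integrand d v \<le> w powr (- d) * (1 - v) powr (d - 1)" if "v \<in> {w..1}" for v
      using that w d unfolding beta_integrand_def by (intro mult_right_mono powr_mono2') auto
  qed
  moreover have "integral {w..1} (\<lambda>v. w powr (- d) * (1 - v) powr (d - 1)) = w powr (- d) * ((1 - w) powr d / d)"
    using integral_unique[OF has_integral_one_minus_powr[OF d(1) w(2)]] by simp
  ultimately show ?thesis by simp
qed

definition psi_coeff :: "real \<Rightarrow> real" where
  "psi_coeff \<alpha> = 2 / \<alpha> * (pi / sin (2 * pi / \<alpha>))"

lemma one_less_psi_coeff:
  assumes "2 < \<alpha>"
  shows "1 < psi_coeff \<alpha>"
proof -
  have "0 < 2 * pi / \<alpha>" "2 * pi / \<alpha> < pi" using assms by (auto simp: field_simps)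
  then have "0 < sin (2 * pi / \<alpha>)" "sin (2 * pi / \<alpha>) < 2 * pi / \<alpha>"
    by (auto intro: sin_gt_zero sin_less_self)
  then show ?thesis using assms by (simp add: psi_coeff_def field_simps)
qed

lemma psi_bounds:
  fixes \<alpha> z :: real
  assumes \<alpha>: "2 < \<alpha>" and z: "0 < z"
  shows "psi \<alpha> z \<le> psi_coeff \<alpha> * z powr (2 / \<alpha>)"
    and "psi_coeff \<alpha> * z powr (2 / \<alpha>) - 1 \<le> psi \<alpha> z"
    and "0 < psi \<alpha> z"
proof -
  define d where "d = 2 / \<alpha>"
  have d: "0 < d" "d < 1" using \<alpha> by (auto simp: d_def field_simps)
  define w where "w = z / (1 + z)"
  have w: "0 < w" "w < 1" using z by (auto simp: w_def field_simps)
  have psi: "psi \<alpha> z = d * z powr d * integral {0..w} (beta_integrand d)"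
    using psi_eq_incomplete_beta[OF \<alpha> z] by (simp add: d_def w_def)
  have coeff: "psi_coeff \<alpha> * z powr (2 / \<alpha>) = d * z powr d * (pi / sin (pi * d))"
    by (simp add: psi_coeff_def d_def mult.commute[of pi])
  have dz: "0 < d * z powr d" using d z by simp
  show "psi \<alpha> z \<le> psi_coeff \<alpha> * z powr (2 / \<alpha>)"
    unfolding psi coeff using integral_beta_integrand_le[OF d] w dz by (intro mult_left_mono) auto
  show "0 < psi \<alpha> z"
    unfolding psi using integral_beta_integrand_ge_half[OF d w] dz w by simp
  have "w powr (- d) * (1 - w) powr d = z powr (- d) * ((1 + z) powr d * (1 / (1 + z)) powr d)"
    using z by (simp add: w_def powr_divide powr_minus field_simps)
  also have "\<dots> = z powr (- d)"
    using z by (simp add: powr_mult[symmetric])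
  finally have "d * z powr d * (w powr (- d) * (1 - w) powr d / d) = 1"
    using d z w by (simp add: powr_minus field_simps)
  then have "d * z powr d * (pi / sin (pi * d) - integral {0..w} (beta_integrand d)) \<le> 1"
    using integral_beta_integrand_tail_le[OF d w(1)] w dz
    by (metis less_imp_le mult_left_mono)
  then show "psi_coeff \<alpha> * z powr (2 / \<alpha>) - 1 \<le> psi \<alpha> z"
    unfolding psi coeff by (simp add: algebra_simps)
qed

lemma continuous_on_psi:
  assumes \<alpha>: "2 < \<alpha>"
  shows "continuous_on {0<..} (psi \<alpha>)"
proof -
  define d where "d = 2 / \<alpha>"
  have d: "0 < d" "d < 1" using \<alpha> by (auto simp: d_def field_simps)
  have "continuous_on {0..1} (\<lambda>w. integral {0..w} (beta_integrand d))"
    using beta_integrand_integrable_on[OF d] by (intro indefinite_integral_continuous_1) auto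
  moreover have "continuous_on {0<..} (\<lambda>z::real. z / (1 + z))"
    by (intro continuous_intros) auto
  ultimately have "continuous_on {0<..} (\<lambda>z. integral {0..z / (1 + z)} (beta_integrand d))"
    by (rule continuous_on_compose2) auto
  then have "continuous_on {0<..} (\<lambda>z. d * z powr d * integral {0..z / (1 + z)} (beta_integrand d))"
    by (intro continuous_intros) auto
  then show ?thesis
    by (rule continuous_on_eq) (use psi_eq_incomplete_beta[OF \<alpha>] in \<open>simp add: d_def\<close>)
qed

lemma psi_rescaled_bounds:
  fixes \<alpha> h \<theta> r :: real
  assumes \<alpha>: "2 < \<alpha>" and h: "0 < h" and \<theta>: "0 < \<theta>" and r: "0 < r"
  defines "c \<equiv> psi_coeff \<alpha> * \<theta> powr (2 / \<alpha>)"
  shows "h\<^sup>2 * psi \<alpha> (\<theta> * h powr (- \<alpha>) * r powr \<alpha>) \<le> c * r\<^sup>2"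
    and "c * r\<^sup>2 - h\<^sup>2 \<le> h\<^sup>2 * psi \<alpha> (\<theta> * h powr (- \<alpha>) * r powr \<alpha>)"
proof -
  define z where "z = \<theta> * h powr (- \<alpha>) * r powr \<alpha>"
  have z: "0 < z" using h \<theta> r by (simp add: z_def)
  have "z powr (2 / \<alpha>) = \<theta> powr (2 / \<alpha>) * h powr (-2) * r powr 2"
    using \<alpha> h \<theta> r by (simp add: z_def powr_mult powr_powr)
  then have rescale: "h\<^sup>2 * (psi_coeff \<alpha> * z powr (2 / \<alpha>)) = c * r\<^sup>2"
    using h r by (simp add: c_def powr_minus powr_realpow field_simps)
  show "h\<^sup>2 * psi \<alpha> (\<theta> * h powr (- \<alpha>) * r powr \<alpha>) \<le> c * r\<^sup>2"
    using mult_left_mono[OF psi_bounds(1)[OF \<alpha> z], of "h\<^sup>2"] rescale by (simp add: z_def)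
  show "c * r\<^sup>2 - h\<^sup>2 \<le> h\<^sup>2 * psi \<alpha> (\<theta> * h powr (- \<alpha>) * r powr \<alpha>)"
    using mult_left_mono[OF psi_bounds(2)[OF \<alpha> z], of "h\<^sup>2"] rescale
    by (simp add: z_def right_diff_distrib)
qed

lemma Pcov_S_bounds:
  fixes \<alpha> h \<theta> lam :: real
  assumes \<alpha>: "2 < \<alpha>" and h: "0 < h" and \<theta>: "0 < \<theta>" and lam: "0 < lam"
  defines "c \<equiv> psi_coeff \<alpha> * \<theta> powr (2 / \<alpha>)"
  shows "exp (- pi * lam * c * h\<^sup>2) / c \<le> Pcov_S \<alpha> h \<theta> lam"
    and "Pcov_S \<alpha> h \<theta> lam \<le> exp (- pi * lam * (c - 1) * h\<^sup>2) / c"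
proof -
  have c: "0 < c" using one_less_psi_coeff[OF \<alpha>] \<theta> by (simp add: c_def)
  define b where "b = pi * lam * c"
  have b: "0 < b" using c lam by (simp add: b_def)
  define z where "z r = \<theta> * h powr (- \<alpha>) * r powr \<alpha>" for r
  define f where "f r = exp (- pi * lam * h\<^sup>2 * psi \<alpha> (z r)) * r" for r
  define l where "l r = exp (- b * r\<^sup>2) * r" for r
  define u where "u r = exp (pi * lam * h\<^sup>2) * l r" for r
  have bounds: "0 \<le> l r \<and> l r \<le> f r \<and> f r \<le> u r" if "r \<in> {h..}" for r
  proof -
    have r: "0 < r" using that h by simp
    note psi_r = psi_rescaled_bounds[OF \<alpha> h \<theta> r, folded c_def z_def]
    have "- b * r\<^sup>2 \<le> - pi * lam * h\<^sup>2 * psi \<alpha> (z r)"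
      using mult_left_mono[OF psi_r(1), of "pi * lam"] lam by (simp add: b_def algebra_simps)
    moreover have "- pi * lam * h\<^sup>2 * psi \<alpha> (z r) \<le> pi * lam * h\<^sup>2 + - b * r\<^sup>2"
      using mult_left_mono[OF psi_r(2), of "pi * lam"] lam by (simp add: b_def algebra_simps)
    ultimately show ?thesis
      using r unfolding f_def l_def u_def by (auto simp: exp_add[symmetric] mult.assoc[symmetric])
  qed
  have "continuous_on {h..} (\<lambda>r. psi \<alpha> (z r))"
    by (rule continuous_on_compose2[OF continuous_on_psi[OF \<alpha>]])
       (use h \<theta> in \<open>auto simp: z_def intro!: continuous_intros\<close>)
  then have "f \<in> borel_measurable (lebesgue_on {h..})"
    unfolding f_def by (intro continuous_imp_measurable_on_sets_lebesgue continuous_intros) auto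
  moreover have l_integral: "(l has_integral exp (- b * h\<^sup>2) / (2 * b)) {h..}"
    unfolding l_def using has_integral_gaussian_tail[OF b] h by simp
  moreover have "(u has_integral exp (pi * lam * h\<^sup>2) * (exp (- b * h\<^sup>2) / (2 * b))) {h..}"
    unfolding u_def by (rule has_integral_mult_right[OF l_integral])
  ultimately have integral_f:
      "exp (- b * h\<^sup>2) / (2 * b) \<le> integral {h..} f"
      "integral {h..} f \<le> exp (pi * lam * h\<^sup>2) * (exp (- b * h\<^sup>2) / (2 * b))"
    using integral_bounds_of_has_integral_bounds[of "{h..}" f l _ u] bounds by auto
  have Pcov_S: "Pcov_S \<alpha> h \<theta> lam = 2 * pi * lam * integral {h..} f"
    by (simp only: Pcov_S_def f_def[abs_def] z_def)
  show "exp (- pi * lam * c * h\<^sup>2) / c \<le> Pcov_S \<alpha> h \<theta> lam"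
    using mult_left_mono[OF integral_f(1), of "2 * pi * lam"] lam c
    by (simp add: Pcov_S b_def field_simps)
  show "Pcov_S \<alpha> h \<theta> lam \<le> exp (- pi * lam * (c - 1) * h\<^sup>2) / c"
    using mult_left_mono[OF integral_f(2), of "2 * pi * lam"] lam c
    by (simp add: Pcov_S b_def exp_add[symmetric] field_simps)
qed

lemma tendsto_Pcov_C_at_right_0:
  "((\<lambda>lam. Pcov_C \<alpha> h \<theta> lam) \<longlongrightarrow> 1 / (psi \<alpha> \<theta> + 1)) (at_right 0)"
proof -
  have "((\<lambda>lam. Pcov_C \<alpha> h \<theta> lam) \<longlongrightarrow> Pcov_C \<alpha> h \<theta> 0) (at_right 0)"
    unfolding Pcov_C_def by (intro tendsto_intros)
  then show ?thesis by (simp add: Pcov_C_def)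
qed

lemma tendsto_Pcov_C_at_top:
  assumes "2 < \<alpha>" "0 < h" "0 < \<theta>"
  shows "((\<lambda>lam. Pcov_C \<alpha> h \<theta> lam) \<longlongrightarrow> 0) at_top"
  using psi_bounds(3)[of \<alpha> \<theta>] assms unfolding Pcov_C_def by real_asymp

lemma tendsto_Pcov_S_at_right_0:
  assumes \<alpha>: "2 < \<alpha>" and h: "0 < h" and \<theta>: "0 < \<theta>"
  shows "((\<lambda>lam. Pcov_S \<alpha> h \<theta> lam) \<longlongrightarrow> \<alpha> * sin (2 * pi / \<alpha>) / (2 * pi * \<theta> powr (2 / \<alpha>))) (at_right 0)"
proof -
  define c where "c = psi_coeff \<alpha> * \<theta> powr (2 / \<alpha>)"
  have c: "0 < c" using one_less_psi_coeff[OF \<alpha>] \<theta> by (simp add: c_def)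
  have pos: "\<forall>\<^sub>F lam in at_right 0. 0 < (lam::real)"
    by (simp add: eventually_at_right_less)
  have "\<forall>\<^sub>F lam in at_right 0. exp (- pi * lam * c * h\<^sup>2) / c \<le> Pcov_S \<alpha> h \<theta> lam"
    using pos by eventually_elim (use Pcov_S_bounds(1)[OF \<alpha> h \<theta>] in \<open>simp add: c_def\<close>)
  moreover have "\<forall>\<^sub>F lam in at_right 0. Pcov_S \<alpha> h \<theta> lam \<le> exp (- pi * lam * (c - 1) * h\<^sup>2) / c"
    using pos by eventually_elim (use Pcov_S_bounds(2)[OF \<alpha> h \<theta>] in \<open>simp add: c_def\<close>)
  moreover have "((\<lambda>lam. exp (- pi * lam * c * h\<^sup>2) / c) \<longlongrightarrow> 1 / c) (at_right 0)"
    using c by (auto intro!: tendsto_eq_intros)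
  moreover have "((\<lambda>lam. exp (- pi * lam * (c - 1) * h\<^sup>2) / c) \<longlongrightarrow> 1 / c) (at_right 0)"
    using c by (auto intro!: tendsto_eq_intros)
  ultimately have "((\<lambda>lam. Pcov_S \<alpha> h \<theta> lam) \<longlongrightarrow> 1 / c) (at_right 0)"
    by (rule tendsto_sandwich)
  moreover have "1 / c = \<alpha> * sin (2 * pi / \<alpha>) / (2 * pi * \<theta> powr (2 / \<alpha>))"
    by (simp add: c_def psi_coeff_def)
  ultimately show ?thesis by simp
qed

lemma tendsto_Pcov_S_at_top:
  assumes \<alpha>: "2 < \<alpha>" and h: "0 < h" and \<theta>: "1 \<le> \<theta>"
  shows "((\<lambda>lam. Pcov_S \<alpha> h \<theta> lam) \<longlongrightarrow> 0) at_top"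
proof -
  define c where "c = psi_coeff \<alpha> * \<theta> powr (2 / \<alpha>)"
  have "1 \<le> \<theta> powr (2 / \<alpha>)" using \<alpha> \<theta> by (intro ge_one_powr_ge_zero) auto
  then have "psi_coeff \<alpha> \<le> c"
    using one_less_psi_coeff[OF \<alpha>] by (simp add: c_def mult_le_cancel_left1)
  then have c: "0 < c - 1" "0 < c" using one_less_psi_coeff[OF \<alpha>] by auto
  have pos: "\<forall>\<^sub>F lam in at_top. 0 < (lam::real)"
    by (rule eventually_gt_at_top)
  have "\<forall>\<^sub>F lam in at_top. 0 \<le> Pcov_S \<alpha> h \<theta> lam"
    using pos
  proof eventually_elim
    case (elim lam)
    have "0 \<le> exp (- pi * lam * c * h\<^sup>2) / c" using c by simp
    also have "\<dots> \<le> Pcov_S \<alpha> h \<theta> lam"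
      using Pcov_S_bounds(1)[OF \<alpha> h _ elim] \<theta> by (simp add: c_def)
    finally show ?case .
  qed
  moreover have "\<forall>\<^sub>F lam in at_top. Pcov_S \<alpha> h \<theta> lam \<le> exp (- pi * lam * (c - 1) * h\<^sup>2) / c"
    using pos by eventually_elim (use Pcov_S_bounds(2)[OF \<alpha> h] \<theta> in \<open>simp add: c_def\<close>)
  moreover have "((\<lambda>lam. exp (- pi * lam * (c - 1) * h\<^sup>2) / c) \<longlongrightarrow> 0) at_top"
    using c h by real_asymp
  ultimately show ?thesis
    by (rule tendsto_sandwich[OF _ _ tendsto_const])
qed

theorem lemma3:
  fixes h \<alpha> :: real
  assumes "h > 0" and "\<alpha> > 2"
  shows "(\<forall>\<theta>>0. ((\<lambda>lam. Pcov_C \<alpha> h \<theta> lam) \<longlongrightarrow> 1 / (psi \<alpha> \<theta> + 1)) (at_right 0))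
       \<and> (\<forall>\<theta>\<ge>1. ((\<lambda>lam. Pcov_S \<alpha> h \<theta> lam) \<longlongrightarrow>
              \<alpha> * sin (2 * pi / \<alpha>) / (2 * pi * \<theta> powr (2 / \<alpha>))) (at_right 0))
       \<and> (\<forall>\<theta>>0. ((\<lambda>lam. Pcov_C \<alpha> h \<theta> lam) \<longlongrightarrow> 0) at_top)
       \<and> (\<forall>\<theta>\<ge>1. ((\<lambda>lam. Pcov_S \<alpha> h \<theta> lam) \<longlongrightarrow> 0) at_top)"
  using assms by (auto intro: tendsto_Pcov_C_at_right_0 tendsto_Pcov_C_at_top
      tendsto_Pcov_S_at_right_0 tendsto_Pcov_S_at_top)

end
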